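(* Let $f,g$ be smooth functions on an interval $I\subset\mathbb{R}$ with $\dot f^2+\dot g^2=1$ and $f$ nowhere zero, let $l=l(v)$, $v\in J$, be an arc-length parametrized curve $c$ on the unit sphere $S^2(1)\subset\mathbb{R}^3=\mathrm{span}\{e_1,e_2,e_3\}$ with spherical curvature $\kappa(v)$, and let $M^2: z(u,v)=f(u)\,l(v)+g(u)\,e_4$ (a meridian surface). Assume $M^2$ belongs to the general class, i.e. $\kappa_m(u)\kappa(v)\neq0$, where $\kappa_m=\dot f\ddot g-\dot g\ddot f$. Let $a\neq0$ be a constant. Then $M^2$ has constant mean curvature $\|H\|=a$ if and only if the curve $c$ is a circle on $S^2(1)$ with constant spherical curvature $\kappa\equiv b$ for some constant $b\neq0$, and $f$ satisfies the differential equation $$\bigl(1-\dot f^2-f\ddot f\bigr)^2=(1-\dot f^2)\,(4a^2f^2-b^2).$$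
   Context: $\{e_1,e_2,e_3,e_4\}$ is the standard orthonormal basis of $\mathbb{R}^4$. For the arc-length curve $l(v)$ on $S^2(1)$ set $t=l'$ and let $n$ be the unit vector with $\{t,n,l\}$ orthonormal; the spherical curvature $\kappa$ is defined by $l'=t$, $t'=\kappa n-l$, $n'=-\kappa t$. $\kappa_m$ is the curvature of the meridian $u\mapsto(f(u),g(u))$. $H$ is the mean curvature vector field of $M^2$ in $\mathbb{R}^4$ (half the trace of the second fundamental form) and $\|H\|$ its length. *)

theory Defs
  imports "HOL-Analysis.Analysis" "HOL-Analysis.Cross3"
begin

definition vderiv :: "(real \<Rightarrow> 'a::real_normed_vector) \<Rightarrow> real \<Rightarrow> 'a" where
  "vderiv h = (\<lambda>t. vector_derivative h (at t))"

definition smooth_on :: "real set \<Rightarrow> (real \<Rightarrow> 'a::real_normed_vector) \<Rightarrow> bool" where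
  "smooth_on S h \<longleftrightarrow> (\<forall>n. \<forall>x\<in>S. ((vderiv ^^ n) h) differentiable (at x))"

text \<open>Tangent and spherical curvature of a curve l on S^2(1) in R^3,
  with n = l \<times> t, so that {t,n,l} is orthonormal and t' = kappa n - l.\<close>
definition sph_curvature :: "(real \<Rightarrow> real^3) \<Rightarrow> real \<Rightarrow> real" where
  "sph_curvature l v = vderiv (vderiv l) v \<bullet> cross3 (l v) (vderiv l v)"

definition meridian_curvature :: "(real \<Rightarrow> real) \<Rightarrow> (real \<Rightarrow> real) \<Rightarrow> real \<Rightarrow> real" where
  "meridian_curvature f g u =
     deriv f u * deriv (deriv g) u - deriv g u * deriv (deriv f) u"

definition pu :: "(real \<times> real \<Rightarrow> 'a::real_normed_vector) \<Rightarrow> real \<times> real \<Rightarrow> 'a" where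
  "pu z = (\<lambda>(u,v). vector_derivative (\<lambda>s. z (s,v)) (at u))"

definition pv :: "(real \<times> real \<Rightarrow> 'a::real_normed_vector) \<Rightarrow> real \<times> real \<Rightarrow> 'a" where
  "pv z = (\<lambda>(u,v). vector_derivative (\<lambda>s. z (u,s)) (at v))"

text \<open>Mean curvature vector field H = (1/2) trace of the second fundamental form:
  H = (1/2) (G h(z_u,z_u) - 2F h(z_u,z_v) + E h(z_v,z_v)) / (EG - F^2),
  where h(X,Y) is the normal component (orthogonal to span{z_u,z_v}) of the second derivatives.\<close>
definition normal_part :: "'a::real_inner \<Rightarrow> 'a \<Rightarrow> 'a \<Rightarrow> 'a" where
  "normal_part zu zv x =
     (let E = zu \<bullet> zu; F = zu \<bullet> zv; G = zv \<bullet> zv; D = E * G - F\<^sup>2 in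
      x - (((G * (x \<bullet> zu) - F * (x \<bullet> zv)) / D) *\<^sub>R zu
           + ((E * (x \<bullet> zv) - F * (x \<bullet> zu)) / D) *\<^sub>R zv))"

definition mean_curvature_vector ::
    "(real \<times> real \<Rightarrow> 'a::real_inner) \<Rightarrow> real \<times> real \<Rightarrow> 'a" where
  "mean_curvature_vector z p =
     (let zu = pu z p; zv = pv z p;
          zuu = pu (pu z) p; zuv = pv (pu z) p; zvv = pv (pv z) p;
          E = zu \<bullet> zu; F = zu \<bullet> zv; G = zv \<bullet> zv; D = E * G - F\<^sup>2 in
      (1/2) *\<^sub>R normal_part zu zv ((G / D) *\<^sub>R zuu - (2 * F / D) *\<^sub>R zuv + (E / D) *\<^sub>R zvv))"

text \<open>R^4 = R^3 (span e1,e2,e3) \<oplus> R e4; the meridian surface z(u,v) = f(u) l(v) + g(u) e4.\<close>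
definition meridian_surface ::
    "(real \<Rightarrow> real) \<Rightarrow> (real \<Rightarrow> real) \<Rightarrow> (real \<Rightarrow> real^3) \<Rightarrow> real \<times> real \<Rightarrow> (real^3) \<times> real" where
  "meridian_surface f g l = (\<lambda>(u,v). (f u *\<^sub>R l v, g u))"

end

theory Submission imports Defs begin

text \<open>
  Along the coordinate lines the meridian surface has the orthogonal frame
  \<open>z\<^sub>u = (f' l, g')\<close>, \<open>z\<^sub>v = (f t, 0)\<close>, and a direct computation gives
  \<open>4 f\<^sup>2 \<parallel>H\<parallel>\<^sup>2 = f\<^sup>2 (f''\<^sup>2 + g''\<^sup>2) - 2 f f'' + \<kappa>\<^sup>2 + 1 - f'\<^sup>2\<close>.
  Hence \<open>\<parallel>H\<parallel> = a\<close> separates into an equation in \<open>u\<close> plus \<open>\<kappa>\<^sup>2\<close>, so \<open>\<kappa>\<^sup>2\<close> is constant and,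
  \<open>\<kappa>\<close> being continuous and nowhere zero on an interval, \<open>\<kappa>\<close> itself is constant.
  Using \<open>f'\<^sup>2 + g'\<^sup>2 = 1\<close> and \<open>f' f'' + g' g'' = 0\<close>, the \<open>u\<close>-equation multiplied by \<open>g'\<^sup>2\<close>
  is exactly the stated ODE for \<open>f\<close>. Conversely the ODE gives the \<open>u\<close>-equation wherever
  \<open>g' \<noteq> 0\<close>; at a zero of \<open>g'\<close> we have \<open>g'' \<noteq> 0\<close> since \<open>\<kappa>\<^sub>m \<noteq> 0\<close>, so such zeros are isolated
  and the equation extends to them by continuity.
\<close>

lemma smooth_on_differentiable:
  assumes "smooth_on S h" "x \<in> S"
  shows "h differentiable (at x)" "vderiv h differentiable (at x)"
    "vderiv (vderiv h) differentiable (at x)"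
  using assms unfolding smooth_on_def
  by (metis funpow_0 One_nat_def funpow.simps(2) o_apply numeral_2_eq_2)+

lemma vderiv_eq_deriv:
  fixes f :: "real \<Rightarrow> real"
  assumes "f differentiable (at x)"
  shows "vderiv f x = deriv f x"
  using assms
  by (metis DERIV_deriv_iff_real_differentiable DERIV_imp_deriv vderiv_def vector_derivative_at
        has_real_derivative_iff_has_vector_derivative)

lemma smooth_on_real_derivatives:
  fixes f :: "real \<Rightarrow> real"
  assumes f: "smooth_on S f" and S: "open S" "x \<in> S"
  shows "(f has_real_derivative deriv f x) (at x)"
    "(deriv f has_real_derivative deriv (deriv f) x) (at x)"
    "isCont (deriv (deriv f)) x"
proof -
  have vd1: "vderiv f y = deriv f y" if "y \<in> S" for y
    using smooth_on_differentiable(1)[OF f that] by (rule vderiv_eq_deriv)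
  have vd2: "vderiv (vderiv f) y = deriv (deriv f) y" if y: "y \<in> S" for y
  proof -
    have "vderiv (vderiv f) y = deriv (vderiv f) y"
      using smooth_on_differentiable(2)[OF f y] by (rule vderiv_eq_deriv)
    also have "\<dots> = deriv (deriv f) y"
      using S(1) y vd1 by (intro deriv_cong_ev) (auto simp: eventually_nhds)
    finally show ?thesis .
  qed
  show "(f has_real_derivative deriv f x) (at x)"
    using smooth_on_differentiable(1)[OF f S(2)] DERIV_deriv_iff_real_differentiable by blast
  have "(vderiv f has_real_derivative vderiv (vderiv f) x) (at x)"
    using smooth_on_differentiable(2)[OF f S(2)]
    by (simp add: vderiv_def[of "vderiv f"] vector_derivative_works[symmetric]
        has_real_derivative_iff_has_vector_derivative)
  then show "(deriv f has_real_derivative deriv (deriv f) x) (at x)"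
    using has_field_derivative_transform_within_open[OF _ S] vd1 vd2[OF S(2)] by metis
  have "isCont (vderiv (vderiv f)) x"
    using smooth_on_differentiable(3)[OF f S(2)] differentiable_imp_continuous_within by blast
  then show "isCont (deriv (deriv f)) x"
    using isCont_cong[of "vderiv (vderiv f)" "deriv (deriv f)" x] S vd2
    by (auto simp: eventually_nhds)
qed

lemma has_real_derivative_const_on_open:
  fixes h :: "real \<Rightarrow> real"
  assumes "(h has_real_derivative d) (at x)" "open S" "x \<in> S" "\<And>y. y \<in> S \<Longrightarrow> h y = c"
  shows "d = 0"
  using DERIV_unique[OF has_field_derivative_transform_within_open[OF assms(1-3)] DERIV_const]
    assms(4) by metis

lemma has_real_derivative_inner:
  fixes p q :: "real \<Rightarrow> 'a::real_inner"
  assumes "(p has_vector_derivative p') (at x)" "(q has_vector_derivative q') (at x)"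
  shows "((\<lambda>s. p s \<bullet> q s) has_real_derivative (p x \<bullet> q' + p' \<bullet> q x)) (at x)"
  using bounded_bilinear.has_vector_derivative[OF bounded_bilinear_inner assms]
  by (simp add: has_real_derivative_iff_has_vector_derivative)

lemma inner_cross3_square:
  fixes x L T :: "real^3"
  shows "(x \<bullet> cross3 L T)\<^sup>2 = (x \<bullet> x) * (L \<bullet> L) * (T \<bullet> T) + 2 * (x \<bullet> L) * (L \<bullet> T) * (T \<bullet> x)
           - (x \<bullet> x) * (L \<bullet> T)\<^sup>2 - (L \<bullet> L) * (x \<bullet> T)\<^sup>2 - (T \<bullet> T) * (x \<bullet> L)\<^sup>2"
  unfolding cross3_def inner_vec_def sum_3
  by (simp add: vector_def power2_eq_square algebra_simps)

lemma constant_if_square_constant: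
  fixes k :: "real \<Rightarrow> real"
  assumes "connected S" "continuous_on S k" "\<forall>x\<in>S. k x \<noteq> 0"
    and sq: "\<forall>x\<in>S. (k x)\<^sup>2 = c" and "x0 \<in> S" "x \<in> S"
  shows "k x = k x0"
proof (rule ccontr)
  assume "k x \<noteq> k x0"
  with sq \<open>x \<in> S\<close> \<open>x0 \<in> S\<close> have "k x = - k x0"
    by (metis power2_eq_iff)
  moreover have "connected (k ` S)"
    using assms(2,1) by (rule connected_continuous_image)
  ultimately have "0 \<in> k ` S"
    using \<open>x \<in> S\<close> \<open>x0 \<in> S\<close>
    by (cases "k x0 > 0") (auto intro: connectedD_interval[of "k ` S" "k x" "k x0"]
        connectedD_interval[of "k ` S" "k x0" "k x"])
  with assms(3) show False by auto
qed

lemma factor_zero_if_product_zero: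
  fixes h P :: "real \<Rightarrow> real"
  assumes prod: "\<forall>y\<in>S. h y * P y = 0" and S: "open S" "u \<in> S"
    and P: "isCont P u" and h: "(h has_real_derivative d) (at u)" "h u \<noteq> 0 \<or> d \<noteq> 0"
  shows "P u = 0"
proof (rule ccontr)
  assume "P u \<noteq> 0"
  then have "eventually (\<lambda>y. P y \<noteq> 0) (nhds u)"
    using P by (simp add: eventually_nhds_conv_at isCont_def tendsto_imp_eventually_ne)
  then have "eventually (\<lambda>y. P y \<noteq> 0 \<and> y \<in> S) (nhds u)"
    using S by (simp add: eventually_conj eventually_nhds_in_open)
  then obtain T where T: "open T" "u \<in> T" "\<And>y. y \<in> T \<Longrightarrow> h y = 0"
    using prod unfolding eventually_nhds by (metis mult_eq_0_iff)
  then show False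
    using has_real_derivative_const_on_open[OF h(1) T] h(2) by blast
qed

lemma norm_mean_curvature_vector_in_frame:
  fixes z :: "real \<times> real \<Rightarrow> (real^3) \<times> real" and L T A :: "real^3"
  assumes zu: "pu z p = (f1 *\<^sub>R L, g1)" and zv: "pv z p = (r *\<^sub>R T, 0)"
    and zuu: "pu (pu z) p = (f2 *\<^sub>R L, g2)" and zuv: "pv (pu z) p = (f1 *\<^sub>R T, 0)"
    and zvv: "pv (pv z) p = (r *\<^sub>R A, 0)"
    and frame: "L \<bullet> L = 1" "L \<bullet> T = 0" "T \<bullet> T = 1" "T \<bullet> A = 0" "L \<bullet> A = -1"
    and unit: "f1\<^sup>2 + g1\<^sup>2 = 1" and orth: "f1 * f2 + g1 * g2 = 0" and r: "r \<noteq> 0"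
  shows "(norm (mean_curvature_vector z p))\<^sup>2 = (f2\<^sup>2 + g2\<^sup>2 - 2 * f2 / r + (A \<bullet> A - f1\<^sup>2) / r\<^sup>2) / 4"
proof -
  have E: "pu z p \<bullet> pu z p = 1" and F: "pu z p \<bullet> pv z p = 0" and G: "pv z p \<bullet> pv z p = r\<^sup>2"
    using unit frame by (simp_all add: zu zv power2_eq_square)
  define X where "X = (f2 *\<^sub>R L + (1 / r) *\<^sub>R A, g2)"
  have Xu: "X \<bullet> pu z p = - f1 / r" and Xv: "X \<bullet> pv z p = 0"
    using frame orth by (simp_all add: X_def zu zv inner_add_left inner_commute algebra_simps)
  have "mean_curvature_vector z p = (1/2) *\<^sub>R normal_part (pu z p) (pv z p) X"
    unfolding mean_curvature_vector_def Let_def E F G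
    using r by (simp add: X_def zuu zvv power2_eq_square)
  also have "normal_part (pu z p) (pv z p) X = X + (f1 / r) *\<^sub>R pu z p"
    using r unfolding normal_part_def Let_def E F G Xu Xv by (simp add: power2_eq_square)
  finally have "mean_curvature_vector z p = (1/2) *\<^sub>R (X + (f1 / r) *\<^sub>R pu z p)" .
  then have "(norm (mean_curvature_vector z p))\<^sup>2
      = (X \<bullet> X + 2 * (f1 / r) * (X \<bullet> pu z p) + (f1 / r)\<^sup>2 * (pu z p \<bullet> pu z p)) / 4"
    unfolding power2_norm_eq_inner
    by (simp add: inner_add_left inner_add_right inner_commute power2_eq_square algebra_simps)
  also have "X \<bullet> X = f2\<^sup>2 - 2 * f2 / r + (A \<bullet> A) / r\<^sup>2 + g2\<^sup>2"
    using frame by (simp add: X_def inner_add_left inner_add_right inner_commute power2_eq_square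
        algebra_simps add_divide_distrib)
  also have "(f2\<^sup>2 - 2 * f2 / r + (A \<bullet> A) / r\<^sup>2 + g2\<^sup>2 + 2 * (f1 / r) * (X \<bullet> pu z p)
      + (f1 / r)\<^sup>2 * (pu z p \<bullet> pu z p)) / 4 = (f2\<^sup>2 + g2\<^sup>2 - 2 * f2 / r + (A \<bullet> A - f1\<^sup>2) / r\<^sup>2) / 4"
    unfolding Xu E using r by (simp add: field_simps power2_eq_square)
  finally show ?thesis .
qed

lemma meridian_surface_partials:
  fixes f g :: "real \<Rightarrow> real" and l :: "real \<Rightarrow> real^3"
  assumes I: "open I" "u \<in> I" and J: "open J" "v \<in> J"
    and df: "\<And>s. s \<in> I \<Longrightarrow> (f has_real_derivative deriv f s) (at s)"
    and dg: "\<And>s. s \<in> I \<Longrightarrow> (g has_real_derivative deriv g s) (at s)"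
    and df2: "(deriv f has_real_derivative deriv (deriv f) u) (at u)"
    and dg2: "(deriv g has_real_derivative deriv (deriv g) u) (at u)"
    and dl: "\<And>s. s \<in> J \<Longrightarrow> (l has_vector_derivative vderiv l s) (at s)"
    and dl2: "(vderiv l has_vector_derivative vderiv (vderiv l) v) (at v)"
  shows "pu (meridian_surface f g l) (u,v) = (deriv f u *\<^sub>R l v, deriv g u)"
    "pv (meridian_surface f g l) (u,v) = (f u *\<^sub>R vderiv l v, 0)"
    "pu (pu (meridian_surface f g l)) (u,v) = (deriv (deriv f) u *\<^sub>R l v, deriv (deriv g) u)"
    "pv (pu (meridian_surface f g l)) (u,v) = (deriv f u *\<^sub>R vderiv l v, 0)"
    "pv (pv (meridian_surface f g l)) (u,v) = (f u *\<^sub>R vderiv (vderiv l) v, 0)"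
proof -
  let ?z = "meridian_surface f g l"
  have scaled_pair: "((\<lambda>t. (\<phi> t *\<^sub>R \<gamma> t, \<psi> t)) has_vector_derivative (\<phi>' *\<^sub>R \<gamma> t0 + \<phi> t0 *\<^sub>R \<gamma>', \<psi>')) (at t0)"
    if "(\<phi> has_real_derivative \<phi>') (at t0)" "(\<gamma> has_vector_derivative \<gamma>') (at t0)"
      "(\<psi> has_real_derivative \<psi>') (at t0)"
    for \<phi> \<psi> :: "real \<Rightarrow> real" and \<gamma> :: "real \<Rightarrow> real^3" and \<phi>' \<psi>' \<gamma>' t0
    using has_vector_derivative_Pair[OF has_vector_derivative_scaleR[OF that(1,2)]
        that(3)[unfolded has_real_derivative_iff_has_vector_derivative]]
    by (simp add: algebra_simps)
  have zu: "pu ?z (s,w) = (deriv f s *\<^sub>R l w, deriv g s)" if "s \<in> I" for s w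
    using scaled_pair[OF df[OF that] has_vector_derivative_const dg[OF that]]
    by (simp add: pu_def meridian_surface_def vector_derivative_at)
  have zv: "pv ?z (w,s) = (f w *\<^sub>R vderiv l s, 0)" if "s \<in> J" for s w
    using scaled_pair[OF DERIV_const dl[OF that] DERIV_const]
    by (simp add: pv_def meridian_surface_def vector_derivative_at)
  show "pu ?z (u,v) = (deriv f u *\<^sub>R l v, deriv g u)" "pv ?z (u,v) = (f u *\<^sub>R vderiv l v, 0)"
    using zu[OF I(2)] zv[OF J(2)] .
  have "((\<lambda>t. (deriv f t *\<^sub>R l v, deriv g t)) has_vector_derivative
      (deriv (deriv f) u *\<^sub>R l v, deriv (deriv g) u)) (at u)"
    using scaled_pair[OF df2 has_vector_derivative_const dg2] by simp
  then have "((\<lambda>t. pu ?z (t,v)) has_vector_derivative (deriv (deriv f) u *\<^sub>R l v, deriv (deriv g) u)) (at u)"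
    by (rule has_vector_derivative_transform_within_open[OF _ I]) (simp add: zu)
  then show "pu (pu ?z) (u,v) = (deriv (deriv f) u *\<^sub>R l v, deriv (deriv g) u)"
    by (simp add: pu_def[of "pu ?z"] vector_derivative_at)
  have "((\<lambda>t. pu ?z (u,t)) has_vector_derivative (deriv f u *\<^sub>R vderiv l v, 0)) (at v)"
    using scaled_pair[OF DERIV_const dl[OF J(2)] DERIV_const] by (simp add: zu[OF I(2)])
  then show "pv (pu ?z) (u,v) = (deriv f u *\<^sub>R vderiv l v, 0)"
    by (simp add: pv_def[of "pu ?z"] vector_derivative_at)
  have "((\<lambda>t. (f u *\<^sub>R vderiv l t, 0::real)) has_vector_derivative (f u *\<^sub>R vderiv (vderiv l) v, 0)) (at v)"
    using scaled_pair[OF DERIV_const[of "f u"] dl2 DERIV_const[of 0]] by simp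
  then have "((\<lambda>t. pv ?z (u,t)) has_vector_derivative (f u *\<^sub>R vderiv (vderiv l) v, 0)) (at v)"
    by (rule has_vector_derivative_transform_within_open[OF _ J]) (simp add: zv)
  then show "pv (pv ?z) (u,v) = (f u *\<^sub>R vderiv (vderiv l) v, 0)"
    by (simp add: pv_def[of "pv ?z"] vector_derivative_at)
qed

text \<open>\<open>4 f\<^sup>2 (\<parallel>H\<parallel>\<^sup>2 - a\<^sup>2)\<close> at \<open>(u, v)\<close> when the spherical curvature at \<open>v\<close> is \<open>k\<close>.\<close>

definition cmc_residual :: "(real \<Rightarrow> real) \<Rightarrow> (real \<Rightarrow> real) \<Rightarrow> real \<Rightarrow> real \<Rightarrow> real \<Rightarrow> real" where
  "cmc_residual f g a k u =
     (f u)\<^sup>2 * ((deriv (deriv f) u)\<^sup>2 + (deriv (deriv g) u)\<^sup>2) - 2 * f u * deriv (deriv f) u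
     + k\<^sup>2 + 1 - (deriv f u)\<^sup>2 - 4 * a\<^sup>2 * (f u)\<^sup>2"

locale meridian_surface_data =
  fixes f g :: "real \<Rightarrow> real" and l :: "real \<Rightarrow> real^3" and I J :: "real set"
  assumes open_I: "open I" and open_J: "open J"
    and f_smooth: "smooth_on I f" and g_smooth: "smooth_on I g" and l_smooth: "smooth_on J l"
    and unit_speed: "\<forall>u\<in>I. (deriv f u)\<^sup>2 + (deriv g u)\<^sup>2 = 1"
    and f_nonzero: "\<forall>u\<in>I. f u \<noteq> 0"
    and on_sphere: "\<forall>v\<in>J. norm (l v) = 1"
    and arclength: "\<forall>v\<in>J. norm (vderiv l v) = 1"
begin

lemmas f_derivatives = smooth_on_real_derivatives[OF f_smooth open_I]
lemmas g_derivatives = smooth_on_real_derivatives[OF g_smooth open_I]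

lemma l_derivatives:
  assumes "v \<in> J"
  shows "(l has_vector_derivative vderiv l v) (at v)"
    "(vderiv l has_vector_derivative vderiv (vderiv l) v) (at v)"
  using smooth_on_differentiable(1,2)[OF l_smooth assms]
  by (simp_all add: vderiv_def vector_derivative_works[symmetric])

lemma meridian_acceleration_orthogonal:
  assumes u: "u \<in> I"
  shows "deriv f u * deriv (deriv f) u + deriv g u * deriv (deriv g) u = 0"
proof -
  have "((\<lambda>s. (deriv f s)\<^sup>2 + (deriv g s)\<^sup>2) has_real_derivative
        2 * (deriv f u * deriv (deriv f) u + deriv g u * deriv (deriv g) u)) (at u)"
    by (rule derivative_eq_intros f_derivatives(2)[OF u] g_derivatives(2)[OF u] refl
        | simp add: algebra_simps)+
  then show ?thesis
    using has_real_derivative_const_on_open[OF _ open_I u] unit_speed by fastforce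
qed

lemma spherical_frame:
  assumes v: "v \<in> J"
  shows "l v \<bullet> l v = 1" "l v \<bullet> vderiv l v = 0" "vderiv l v \<bullet> vderiv l v = 1"
    "vderiv l v \<bullet> vderiv (vderiv l) v = 0" "l v \<bullet> vderiv (vderiv l) v = -1"
proof -
  have LL: "l s \<bullet> l s = 1" and TT: "vderiv l s \<bullet> vderiv l s = 1" if "s \<in> J" for s
    using that on_sphere arclength by (simp_all add: power2_norm_eq_inner[symmetric])
  have LT: "l s \<bullet> vderiv l s = 0" if s: "s \<in> J" for s
    using has_real_derivative_const_on_open[OF has_real_derivative_inner[OF l_derivatives(1)[OF s]
          l_derivatives(1)[OF s]] open_J s] LL
    by (simp add: inner_commute)
  show "l v \<bullet> l v = 1" "l v \<bullet> vderiv l v = 0" "vderiv l v \<bullet> vderiv l v = 1"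
    using LL LT TT v by auto
  show "vderiv l v \<bullet> vderiv (vderiv l) v = 0"
    using has_real_derivative_const_on_open[OF has_real_derivative_inner[OF l_derivatives(2)[OF v]
          l_derivatives(2)[OF v]] open_J v] TT
    by (simp add: inner_commute)
  have "l v \<bullet> vderiv (vderiv l) v + vderiv l v \<bullet> vderiv l v = 0"
    using has_real_derivative_const_on_open[OF has_real_derivative_inner[OF l_derivatives(1)[OF v]
          l_derivatives(2)[OF v]] open_J v] LT
    by blast
  then show "l v \<bullet> vderiv (vderiv l) v = -1"
    using TT v by simp
qed

lemma sph_curvature_square:
  assumes v: "v \<in> J"
  shows "(sph_curvature l v)\<^sup>2 = vderiv (vderiv l) v \<bullet> vderiv (vderiv l) v - 1"
  using inner_cross3_square[of "vderiv (vderiv l) v" "l v" "vderiv l v"] spherical_frame[OF v]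
  by (simp add: sph_curvature_def inner_commute)

lemma norm_mean_curvature_eq_iff:
  assumes u: "u \<in> I" and v: "v \<in> J" and a: "a > 0"
  shows "norm (mean_curvature_vector (meridian_surface f g l) (u,v)) = a
         \<longleftrightarrow> cmc_residual f g a (sph_curvature l v) u = 0"
proof -
  have fu: "f u \<noteq> 0"
    using f_nonzero u by blast
  have norm_square: "(norm (mean_curvature_vector (meridian_surface f g l) (u,v)))\<^sup>2
      = ((deriv (deriv f) u)\<^sup>2 + (deriv (deriv g) u)\<^sup>2 - 2 * deriv (deriv f) u / f u
         + ((sph_curvature l v)\<^sup>2 + 1 - (deriv f u)\<^sup>2) / (f u)\<^sup>2) / 4"
    using norm_mean_curvature_vector_in_frame[OF meridian_surface_partials[OF open_I u open_J v
          f_derivatives(1) g_derivatives(1) f_derivatives(2)[OF u] g_derivatives(2)[OF u]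
          l_derivatives(1) l_derivatives(2)[OF v]] spherical_frame[OF v]
          _ meridian_acceleration_orthogonal[OF u] fu]
      unit_speed u sph_curvature_square[OF v]
    by (simp add: inner_commute)
  have scale: "4 * r\<^sup>2 * ((p\<^sup>2 + q\<^sup>2 - 2 * p / r + (k\<^sup>2 + 1 - s\<^sup>2) / r\<^sup>2) / 4 - a\<^sup>2)
      = r\<^sup>2 * (p\<^sup>2 + q\<^sup>2) - 2 * r * p + k\<^sup>2 + 1 - s\<^sup>2 - 4 * a\<^sup>2 * r\<^sup>2" if "r \<noteq> 0" for r p q k s :: real
    using that by (simp add: field_simps power2_eq_square)
  have "4 * (f u)\<^sup>2 * ((norm (mean_curvature_vector (meridian_surface f g l) (u,v)))\<^sup>2 - a\<^sup>2)
      = cmc_residual f g a (sph_curvature l v) u"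
    unfolding norm_square cmc_residual_def using scale[OF fu] .
  then show ?thesis
    using a fu by (auto simp: power2_eq_iff_nonneg)
qed

lemma cmc_residual_ode:
  assumes u: "u \<in> I"
  shows "(deriv g u)\<^sup>2 * cmc_residual f g a b u
       = (1 - (deriv f u)\<^sup>2 - f u * deriv (deriv f) u)\<^sup>2
         - (1 - (deriv f u)\<^sup>2) * (4 * a\<^sup>2 * (f u)\<^sup>2 - b\<^sup>2)"
proof -
  have "(deriv f u)\<^sup>2 + (deriv g u)\<^sup>2 = 1"
    using unit_speed u by blast
  with meridian_acceleration_orthogonal[OF u] show ?thesis
    unfolding cmc_residual_def by algebra
qed

lemma continuous_on_sph_curvature: "continuous_on J (sph_curvature l)"
proof (rule continuous_at_imp_continuous_on, intro ballI)
  fix v assume v: "v \<in> J"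
  have "isCont (vderiv (vderiv l)) v"
    using smooth_on_differentiable(3)[OF l_smooth v] differentiable_imp_continuous_within by blast
  then show "isCont (sph_curvature l) v"
    unfolding sph_curvature_def
    using has_vector_derivative_continuous[OF l_derivatives(1)[OF v]]
      has_vector_derivative_continuous[OF l_derivatives(2)[OF v]]
    by (intro continuous_intros continuous_cross)
qed

lemma isCont_cmc_residual:
  assumes u: "u \<in> I"
  shows "isCont (cmc_residual f g a b) u"
  unfolding cmc_residual_def
  using DERIV_isCont[OF f_derivatives(1)[OF u]] DERIV_isCont[OF f_derivatives(2)[OF u]]
    f_derivatives(3)[OF u] g_derivatives(3)[OF u]
  by (intro continuous_intros)

lemma cmc_imp_constant_curvature:
  assumes H: "\<forall>u\<in>I. \<forall>v\<in>J. norm (mean_curvature_vector (meridian_surface f g l) (u,v)) = a"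
    and a: "a > 0" and J: "is_interval J" and \<kappa>: "\<forall>v\<in>J. sph_curvature l v \<noteq> 0"
    and u0: "u0 \<in> I" and v0: "v0 \<in> J"
  shows "\<forall>v\<in>J. sph_curvature l v = sph_curvature l v0"
    "\<forall>u\<in>I. (1 - (deriv f u)\<^sup>2 - f u * deriv (deriv f) u)\<^sup>2
             = (1 - (deriv f u)\<^sup>2) * (4 * a\<^sup>2 * (f u)\<^sup>2 - (sph_curvature l v0)\<^sup>2)"
proof -
  have residual: "cmc_residual f g a (sph_curvature l v) u = 0" if "u \<in> I" "v \<in> J" for u v
    using H norm_mean_curvature_eq_iff[OF that a] that by blast
  have "(sph_curvature l v)\<^sup>2 = (sph_curvature l v0)\<^sup>2" if "v \<in> J" for v
    using residual[OF u0 that] residual[OF u0 v0] by (simp add: cmc_residual_def)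
  then show "\<forall>v\<in>J. sph_curvature l v = sph_curvature l v0"
    using constant_if_square_constant[OF is_interval_connected[OF J] continuous_on_sph_curvature \<kappa>]
      v0 by blast
  show "\<forall>u\<in>I. (1 - (deriv f u)\<^sup>2 - f u * deriv (deriv f) u)\<^sup>2
             = (1 - (deriv f u)\<^sup>2) * (4 * a\<^sup>2 * (f u)\<^sup>2 - (sph_curvature l v0)\<^sup>2)"
  proof
    fix u assume u: "u \<in> I"
    show "(1 - (deriv f u)\<^sup>2 - f u * deriv (deriv f) u)\<^sup>2
        = (1 - (deriv f u)\<^sup>2) * (4 * a\<^sup>2 * (f u)\<^sup>2 - (sph_curvature l v0)\<^sup>2)"
      using cmc_residual_ode[OF u, of a "sph_curvature l v0"] residual[OF u v0] by simp
  qed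
qed

lemma constant_curvature_imp_cmc:
  assumes \<kappa>: "\<forall>v\<in>J. sph_curvature l v = b" and a: "a > 0"
    and \<kappa>\<^sub>m: "\<forall>u\<in>I. meridian_curvature f g u \<noteq> 0"
    and ode: "\<forall>u\<in>I. (1 - (deriv f u)\<^sup>2 - f u * deriv (deriv f) u)\<^sup>2
                   = (1 - (deriv f u)\<^sup>2) * (4 * a\<^sup>2 * (f u)\<^sup>2 - b\<^sup>2)"
  shows "\<forall>u\<in>I. \<forall>v\<in>J. norm (mean_curvature_vector (meridian_surface f g l) (u,v)) = a"
proof -
  have "cmc_residual f g a b u = 0" if u: "u \<in> I" for u
  proof (rule factor_zero_if_product_zero[OF _ open_I u isCont_cmc_residual[OF u]
        g_derivatives(2)[OF u]])
    show "\<forall>y\<in>I. deriv g y * cmc_residual f g a b y = 0"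
    proof
      fix y assume y: "y \<in> I"
      have "(deriv g y)\<^sup>2 * cmc_residual f g a b y = 0"
        using cmc_residual_ode[OF y, of a b] ode y by simp
      then show "deriv g y * cmc_residual f g a b y = 0"
        by simp
    qed
    text \<open>Where \<open>g' = 0\<close>, the meridian curvature reduces to \<open>f' g''\<close>.\<close>
    show "deriv g u \<noteq> 0 \<or> deriv (deriv g) u \<noteq> 0"
      using \<kappa>\<^sub>m u by (auto simp: meridian_curvature_def)
  qed
  then show ?thesis
    using norm_mean_curvature_eq_iff[OF _ _ a] \<kappa> by simp
qed

end

theorem proposition5p2:
  fixes f g :: "real \<Rightarrow> real" and l :: "real \<Rightarrow> real^3"
    and I J :: "real set" and a :: real
  assumes I: "is_interval I" "open I" "I \<noteq> {}"
    and J: "is_interval J" "open J" "J \<noteq> {}"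
    and fg_smooth: "smooth_on I f" "smooth_on I g"
    and fg_unit: "\<forall>u\<in>I. (deriv f u)\<^sup>2 + (deriv g u)\<^sup>2 = 1"
    and f_nz: "\<forall>u\<in>I. f u \<noteq> 0"
    and l_smooth: "smooth_on J l"
    and l_sphere: "\<forall>v\<in>J. norm (l v) = 1"
    and l_arclength: "\<forall>v\<in>J. norm (vderiv l v) = 1"
    and general: "\<forall>u\<in>I. \<forall>v\<in>J. meridian_curvature f g u * sph_curvature l v \<noteq> 0"
    and a: "a > 0"
  shows "(\<forall>u\<in>I. \<forall>v\<in>J. norm (mean_curvature_vector (meridian_surface f g l) (u,v)) = a)
     \<longleftrightarrow> (\<exists>b. b \<noteq> 0 \<and> (\<forall>v\<in>J. sph_curvature l v = b) \<and>
            (\<forall>u\<in>I. (1 - (deriv f u)\<^sup>2 - f u * deriv (deriv f) u)\<^sup>2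
                     = (1 - (deriv f u)\<^sup>2) * (4 * a\<^sup>2 * (f u)\<^sup>2 - b\<^sup>2)))"
proof -
  interpret meridian_surface_data f g l I J
    using I J fg_smooth fg_unit f_nz l_smooth l_sphere l_arclength by unfold_locales
  obtain u0 v0 where u0: "u0 \<in> I" and v0: "v0 \<in> J"
    using I(3) J(3) by blast
  have \<kappa>: "\<forall>v\<in>J. sph_curvature l v \<noteq> 0" and \<kappa>\<^sub>m: "\<forall>u\<in>I. meridian_curvature f g u \<noteq> 0"
    using general u0 v0 by fastforce+
  show ?thesis
  proof
    assume "\<forall>u\<in>I. \<forall>v\<in>J. norm (mean_curvature_vector (meridian_surface f g l) (u,v)) = a"
    from cmc_imp_constant_curvature[OF this a J(1) \<kappa> u0 v0] \<kappa> v0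
    show "\<exists>b. b \<noteq> 0 \<and> (\<forall>v\<in>J. sph_curvature l v = b) \<and>
            (\<forall>u\<in>I. (1 - (deriv f u)\<^sup>2 - f u * deriv (deriv f) u)\<^sup>2
                     = (1 - (deriv f u)\<^sup>2) * (4 * a\<^sup>2 * (f u)\<^sup>2 - b\<^sup>2))"
      by blast
  qed (use constant_curvature_imp_cmc[OF _ a \<kappa>\<^sub>m] in blast)
qed

end
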